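(* For all $n,k\in\mathbb Z$, \[ \binom nk_{a,b;q,p}=\binom{n}{n-k}_{b,a;q,p}\prod_{j=1}^kW_{a,b;q,p}(j,n-k) =(-1)^{n-k}\operatorname{sgn}(n-k)\binom{-k-1}{-n-1}_{a/b,1/b;q,p}\prod_{j=1}^{n-k}W_{a,b;q,p}(n+1-j,j)^{-1} =(-1)^k\operatorname{sgn}(k)\binom{k-n-1}{k}_{1/a,b/a;q,p}\prod_{j=1}^kW_{a,b;q,p}(j,-j). \]
   Context: Let $a,b,q,p\in\mathbb C$ with $|p|<1$, generic so that all theta functions below that appear in denominators are nonzero. $\theta(x;p)=\prod_{j\ge0}(1-p^jx)(1-p^{j+1}/x)$ and $\theta(x_1,\dots,x_\ell;p)=\prod_i\theta(x_i;p)$. $\operatorname{sgn}(n)=1$ for $n\ge0$, $-1$ for $n<0$. Product convention: $\prod_{j=l}^m A_j=A_l\cdots A_m$ if $m>l-1$, $=1$ if $m=l-1$, $=A_{l-1}^{-1}\cdots A_{m+1}^{-1}$ if $m<l-1$. Elliptic weights: $w_{a,b;q,p}(s,t)=\frac{\theta(aq^{s+2t},bq^{2s+t-2},aq^{t-s-1}/b;p)}{\theta(aq^{s+2t-2},bq^{2s+t},aq^{t-s+1}/b;p)}\,q$ and $W_{a,b;q,p}(s,t)=\prod_{j=1}^t w_{a,b;q,p}(s,j)=\frac{\theta(aq^{s+2t},bq^{2s},bq^{2s-1},aq^{1-s}/b,aq^{-s}/b;p)}{\theta(aq^s,bq^{2s+t},bq^{2s+t-1},aq^{1+t-s}/b,aq^{t-s}/b;p)}q^t$.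 The elliptic binomial coefficients $\binom nk_{a,b;q,p}$ ($n,k\in\mathbb Z$) are the unique family with $\binom n0_{a,b;q,p}=\binom nn_{a,b;q,p}=1$ for all $n$ and $\binom{n+1}{k}_{a,b;q,p}=\binom nk_{a,b;q,p}+\binom n{k-1}_{a,b;q,p}W_{a,b;q,p}(k,n+1-k)$ whenever $(n+1,k)\ne(0,0)$; in closed form $\binom nk_{a,b;q,p}=\frac{(q^{1+k},aq^{1+k},bq^{1+k},aq^{1-k}/b;q,p)_{n-k}}{(q,aq,bq^{1+2k},aq/b;q,p)_{n-k}}$ with $(x;q,p)_r=\prod_{i=0}^{r-1}\theta(xq^i;p)$ (product convention) and $(x_1,\dots,x_\ell;q,p)_r=\prod_i(x_i;q,p)_r$. The coefficients with other parameter pairs, e.g. $\binom{\cdot}{\cdot}_{b,a;q,p}$, are defined in the same way with $(a,b)$ replaced accordingly. *)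

theory Defs
  imports "HOL-Analysis.Analysis"
begin

definition etheta :: "complex \<Rightarrow> complex \<Rightarrow> complex" where
  "etheta x p = (\<Prod>j. (1 - p ^ j * x) * (1 - p ^ Suc j / x))"

definition isgn :: "int \<Rightarrow> complex" where
  "isgn n = (if n \<ge> 0 then 1 else -1)"

definition cprod :: "(int \<Rightarrow> complex) \<Rightarrow> int \<Rightarrow> int \<Rightarrow> complex" where
  "cprod A l m = (if m \<ge> l - 1 then (\<Prod>j\<in>{l..m}. A j)
                  else (\<Prod>j\<in>{m+1..l-1}. inverse (A j)))"

definition ew :: "complex \<Rightarrow> complex \<Rightarrow> complex \<Rightarrow> complex \<Rightarrow> int \<Rightarrow> int \<Rightarrow> complex" where
  "ew a b q p s t =
     (etheta (a * q powi (s + 2 * t)) p * etheta (b * q powi (2 * s + t - 2)) p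
        * etheta (a * q powi (t - s - 1) / b) p)
     / (etheta (a * q powi (s + 2 * t - 2)) p * etheta (b * q powi (2 * s + t)) p
        * etheta (a * q powi (t - s + 1) / b) p) * q"

definition eW :: "complex \<Rightarrow> complex \<Rightarrow> complex \<Rightarrow> complex \<Rightarrow> int \<Rightarrow> int \<Rightarrow> complex" where
  "eW a b q p s t = cprod (\<lambda>j. ew a b q p s j) 1 t"

definition ebinom :: "complex \<Rightarrow> complex \<Rightarrow> complex \<Rightarrow> complex \<Rightarrow> int \<Rightarrow> int \<Rightarrow> complex" where
  "ebinom a b q p = (THE f. (\<forall>n. f n 0 = 1 \<and> f n n = 1) \<and>
      (\<forall>n k. (n + 1, k) \<noteq> (0, 0) \<longrightarrow>
          f (n + 1) k = f n k + f n (k - 1) * eW a b q p k (n + 1 - k)))"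

end

theory Submission
  imports Defs
begin

(* The coefficients with weights W = W_{a,b;q,p} are the unique solution of the Pascal
   recurrence with boundary values 1.  Moreover, a solution of the recurrence that vanishes
   on the region {0 <= n < k} union {n < k <= -1} union {k <= -1, 0 <= n} and equals 1 at
   (0,0), (-1,-1) and (-1,0) is already that solution.  Each right-hand side, as a function
   of (n,k), vanishes on this region because the index maps (n,k) -> (n,n-k), (-k-1,-n-1),
   (k-n-1,k) preserve it, and it satisfies the recurrence with weights W_{a,b} because of the
   weight identities
     w_{b,a}(t,s) = 1 / w_{a,b}(s,t),
     w_{a/b,1/b}(s,t) = 1 / w_{a,b}(1-s-t,t),
     w_{1/a,b/a}(s,t) = 1 / w_{a,b}(s,1-s-t).
   Written as a quotient of three ratios theta(x q^2) / theta(x), each weight identity is an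
   instance of the inversion formula theta(1/x) = -theta(x)/x. *)

section \<open>Theta inversion and the elliptic weights\<close>

lemma convergent_prod_one_minus_geometric:
  fixes c p :: complex
  assumes "norm p < 1"
  shows "convergent_prod (\<lambda>j. 1 - c * p ^ j)"
proof -
  have "summable (\<lambda>j. norm c * norm p ^ j)"
    using assms by (intro summable_mult summable_geometric) simp
  then have "summable (\<lambda>j. norm (1 - c * p ^ j - 1))"
    by (simp add: norm_mult norm_power)
  then show ?thesis
    by (intro abs_convergent_prod_imp_convergent_prod summable_imp_abs_convergent_prod)
qed

lemma etheta_prodinf_split:
  fixes x p :: complex
  assumes "norm p < 1"
  shows "etheta x p = (\<Prod>j. 1 - x * p ^ j) * (\<Prod>j. 1 - p / x * p ^ j)"
  unfolding etheta_def
  using convergent_prod_one_minus_geometric[OF assms, of x]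
    convergent_prod_one_minus_geometric[OF assms, of "p / x"]
  by (subst prodinf_mult) (simp_all add: algebra_simps)

lemma prodinf_split_first:
  fixes f :: "nat \<Rightarrow> complex"
  assumes "convergent_prod f"
  shows "prodinf f = f 0 * (\<Prod>j. f (Suc j))"
  using has_prod_unique[OF has_prod_ignore_initial_segment'[OF assms, of 1]] by simp

lemma etheta_inverse:
  fixes x p :: complex
  assumes "norm p < 1" "x \<noteq> 0"
  shows "etheta (1 / x) p = - etheta x p / x"
proof -
  define A where "A = (\<Prod>j. 1 - x * p * p ^ j)"
  define B where "B = (\<Prod>j. 1 - p / x * p ^ j)"
  have "(\<Prod>j. 1 - x * p ^ j) = (1 - x) * A"
    unfolding A_def using convergent_prod_one_minus_geometric[OF assms(1), of x]
    by (subst prodinf_split_first) (simp_all add: mult.assoc)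
  then have x: "etheta x p = (1 - x) * A * B"
    unfolding etheta_prodinf_split[OF assms(1)] B_def by simp
  have "(\<Prod>j. 1 - 1 / x * p ^ j) = (1 - 1 / x) * B"
    unfolding B_def using convergent_prod_one_minus_geometric[OF assms(1), of "1 / x"]
    by (subst prodinf_split_first) (simp_all add: mult.assoc)
  moreover have "(\<lambda>j. 1 - p / (1 / x) * p ^ j) = (\<lambda>j. 1 - x * p * p ^ j)"
    by (simp add: ac_simps)
  ultimately have inv: "etheta (1 / x) p = (1 - 1 / x) * B * A"
    unfolding etheta_prodinf_split[OF assms(1)] A_def by simp
  show ?thesis
    unfolding x inv using assms(2) by (simp add: field_simps)
qed

definition theta_ratio :: "complex \<Rightarrow> complex \<Rightarrow> complex \<Rightarrow> complex" where
  "theta_ratio q p x = etheta (x * q\<^sup>2) p / etheta x p"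

lemma theta_ratio_inverse:
  assumes "norm p < 1" "x \<noteq> 0" "q \<noteq> 0" "x * y * q\<^sup>2 = 1"
  shows "theta_ratio q p y = q\<^sup>2 / theta_ratio q p x"
proof -
  have y: "y = 1 / (x * q\<^sup>2)"
    using assms(2-4) by (simp add: field_simps)
  have num: "etheta (y * q\<^sup>2) p = - etheta x p / x"
    using etheta_inverse[OF assms(1,2)] assms(3) by (simp add: y)
  have den: "etheta y p = - etheta (x * q\<^sup>2) p / (x * q\<^sup>2)"
    using etheta_inverse[of p "x * q\<^sup>2"] assms(1-3) by (simp add: y)
  show ?thesis
    unfolding theta_ratio_def num den using assms(2,3) by (simp add: divide_inverse ac_simps)
qed

lemma ew_eq_theta_ratio:
  assumes "q \<noteq> 0"
  shows "ew a b q p s t = theta_ratio q p (a * q powi (s + 2 * t - 2))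
    / (theta_ratio q p (b * q powi (2 * s + t - 2)) * theta_ratio q p (a * q powi (t - s - 1) / b)) * q"
proof -
  have "a * q powi (s + 2 * t - 2) * q\<^sup>2 = a * q powi (s + 2 * t)"
    "b * q powi (2 * s + t - 2) * q\<^sup>2 = b * q powi (2 * s + t)"
    "a * q powi (t - s - 1) / b * q\<^sup>2 = a * q powi (t - s + 1) / b"
    using assms by (simp_all add: power_int_diff power_int_add field_simps power2_eq_square)
  then show ?thesis
    unfolding ew_def theta_ratio_def
    by (simp only: divide_inverse inverse_mult_distrib inverse_inverse_eq ac_simps)
qed

lemma ew_swap:
  assumes "norm p < 1" "a \<noteq> 0" "b \<noteq> 0" "q \<noteq> 0"
  shows "ew b a q p t s = inverse (ew a b q p s t)"
proof -
  have inv: "theta_ratio q p (b * q powi (s - t - 1) / a)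
      = q\<^sup>2 / theta_ratio q p (a * q powi (t - s - 1) / b)"
    by (rule theta_ratio_inverse)
      (use assms in \<open>simp_all add: field_simps power_int_add[symmetric] power_int_minus power2_eq_square\<close>)
  have exps: "t + 2 * s - 2 = 2 * s + t - 2" "2 * t + s - 2 = s + 2 * t - 2"
    by simp_all
  have "y / (x * (q\<^sup>2 / z)) * q = inverse (x / (y * z) * q)" for x y z
    using assms(4) by (simp add: divide_inverse inverse_mult_distrib power2_eq_square ac_simps)
  then show ?thesis
    unfolding ew_eq_theta_ratio[OF assms(4)] inv exps .
qed

lemma ew_quot:
  assumes "norm p < 1" "a \<noteq> 0" "b \<noteq> 0" "q \<noteq> 0"
  shows "ew (a / b) (1 / b) q p s t = inverse (ew a b q p (1 - s - t) t)"
proof -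
  have inv: "theta_ratio q p (1 / b * q powi (2 * s + t - 2))
      = q\<^sup>2 / theta_ratio q p (b * q powi (2 * (1 - s - t) + t - 2))"
    by (rule theta_ratio_inverse)
      (use assms in \<open>simp_all add: field_simps power_int_add[symmetric] power_int_minus power2_eq_square\<close>)
  have args: "a / b * q powi (s + 2 * t - 2) = a * q powi (t - (1 - s - t) - 1) / b"
    "a / b * q powi (t - s - 1) / (1 / b) = a * q powi (1 - s - t + 2 * t - 2)"
    using assms by (simp_all add: algebra_simps)
  have "z / ((q\<^sup>2 / y) * x) * q = inverse (x / (y * z) * q)" for x y z
    using assms(4) by (simp add: divide_inverse inverse_mult_distrib power2_eq_square ac_simps)
  then show ?thesis
    unfolding ew_eq_theta_ratio[OF assms(4)] inv args .
qed

lemma ew_recip: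
  assumes "norm p < 1" "a \<noteq> 0" "b \<noteq> 0" "q \<noteq> 0"
  shows "ew (1 / a) (b / a) q p s t = inverse (ew a b q p s (1 - s - t))"
proof -
  have inv: "theta_ratio q p (1 / a * q powi (s + 2 * t - 2))
      = q\<^sup>2 / theta_ratio q p (a * q powi (s + 2 * (1 - s - t) - 2))"
    "theta_ratio q p (b / a * q powi (2 * s + t - 2))
      = q\<^sup>2 / theta_ratio q p (a * q powi (1 - s - t - s - 1) / b)"
    "theta_ratio q p (1 / a * q powi (t - s - 1) / (b / a))
      = q\<^sup>2 / theta_ratio q p (b * q powi (2 * s + (1 - s - t) - 2))"
    by (rule theta_ratio_inverse;
        use assms in \<open>simp_all add: field_simps power_int_add[symmetric] power_int_minus power2_eq_square\<close>)+
  have "(q\<^sup>2 / x) / ((q\<^sup>2 / z) * (q\<^sup>2 / y)) * q = inverse (x / (y * z) * q)" for x y z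
    using assms(4) by (simp add: divide_inverse inverse_mult_distrib power2_eq_square ac_simps)
      (simp add: field_simps)
  then show ?thesis
    unfolding ew_eq_theta_ratio[OF assms(4)] inv .
qed

section \<open>Products with integer bounds\<close>

lemma cprod_last:
  assumes "\<And>j. A j \<noteq> 0"
  shows "cprod A l m = cprod A l (m - 1) * A m"
proof -
  consider "l \<le> m" | "m = l - 1" | "m < l - 1" by linarith
  then show ?thesis
  proof cases
    case 1
    then have "{l..m} = insert m {l..m - 1}" by auto
    with 1 show ?thesis by (simp add: cprod_def mult.commute)
  next
    case 2
    then have "{m..l - 1} = {m}" by auto
    with 2 assms show ?thesis by (simp add: cprod_def)
  next
    case 3
    then have "{m..l - 1} = insert m {m + 1..l - 1}" by auto
    with 3 assms show ?thesis by (simp add: cprod_def)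
  qed
qed

lemma cprod_first:
  assumes "\<And>j. A j \<noteq> 0"
  shows "cprod A l m = A l * cprod A (l + 1) m"
proof -
  consider "l \<le> m" | "m = l - 1" | "m < l - 1" by linarith
  then show ?thesis
  proof cases
    case 1
    then have "{l..m} = insert l {l + 1..m}" by auto
    with 1 show ?thesis by (simp add: cprod_def)
  next
    case 2
    then have "{m + 1..l + 1 - 1} = {l}" by auto
    with 2 assms show ?thesis by (simp add: cprod_def)
  next
    case 3
    then have "{m + 1..l + 1 - 1} = insert l {m + 1..l - 1}" by auto
    with 3 assms show ?thesis by (simp add: cprod_def)
  qed
qed

lemma cprod_mult: "cprod (\<lambda>j. A j * B j) l m = cprod A l m * cprod B l m"
  by (simp add: cprod_def prod.distrib)

lemma cprod_inverse: "cprod (\<lambda>j. inverse (A j)) l m = inverse (cprod A l m)"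
  using prod_inversef[of A, symmetric] prod_inversef[of "\<lambda>j. inverse (A j)"]
  by (simp add: cprod_def comp_def)

lemma cprod_nonzero: "(\<And>j. A j \<noteq> 0) \<Longrightarrow> cprod A l m \<noteq> 0"
  by (simp add: cprod_def)

lemma cprod_shift: "cprod A l m = cprod (\<lambda>j. A (j + 1)) (l - 1) (m - 1)"
proof -
  have "(\<Prod>j\<in>{l..m}. A j) = (\<Prod>j\<in>{l - 1..m - 1}. A (j + 1))"
    "(\<Prod>j\<in>{m + 1..l - 1}. inverse (A j)) = (\<Prod>j\<in>{m - 1 + 1..l - 1 - 1}. inverse (A (j + 1)))"
    by (rule prod.reindex_bij_witness[of _ "\<lambda>j. j + 1" "\<lambda>j. j - 1"]; force)+
  then show ?thesis
    unfolding cprod_def by simp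
qed

lemma cprod_reflect:
  assumes nz: "\<And>j. u j \<noteq> 0"
  shows "cprod u 1 (c - T) = cprod u 1 c * cprod (\<lambda>j. inverse (u (c + 1 - j))) 1 T"
proof (induction T rule: int_induct[where k=0])
  case base
  then show ?case by (simp add: cprod_def)
next
  case (step1 i)
  have "cprod u 1 (c - (i + 1)) = cprod u 1 (c - i) * inverse (u (c - i))"
    using cprod_last[OF nz, where l=1 and m="c - i"] nz by (simp add: field_simps)
  also have "\<dots>
      = cprod u 1 c * (cprod (\<lambda>j. inverse (u (c + 1 - j))) 1 i * inverse (u (c + 1 - (i + 1))))"
    using step1 by simp
  also have "\<dots> = cprod u 1 c * cprod (\<lambda>j. inverse (u (c + 1 - j))) 1 (i + 1)"
    using cprod_last[where A="\<lambda>j. inverse (u (c + 1 - j))" and l=1 and m="i + 1"] nz by simp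
  finally show ?case .
next
  case (step2 i)
  have "cprod u 1 (c - (i - 1)) = cprod u 1 (c - i) * u (c + 1 - i)"
    using cprod_last[OF nz, where l=1 and m="c - i + 1"] by (simp add: algebra_simps)
  also have "\<dots> = cprod u 1 c * (cprod (\<lambda>j. inverse (u (c + 1 - j))) 1 i * u (c + 1 - i))"
    using step2 by simp
  also have "\<dots> = cprod u 1 c * cprod (\<lambda>j. inverse (u (c + 1 - j))) 1 (i - 1)"
    using cprod_last[where A="\<lambda>j. inverse (u (c + 1 - j))" and l=1 and m=i] nz
    by (simp add: field_simps)
  finally show ?case .
qed

section \<open>Pascal-type recurrences with integer indices\<close>

definition pascal_rec :: "(int \<Rightarrow> int \<Rightarrow> 'a::field) \<Rightarrow> (int \<Rightarrow> int \<Rightarrow> 'a) \<Rightarrow> bool" where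
  "pascal_rec W f \<longleftrightarrow>
     (\<forall>n k. (n + 1, k) \<noteq> (0, 0) \<longrightarrow> f (n + 1) k = f n k + f n (k - 1) * W k (n + 1 - k))"

definition pascal :: "(int \<Rightarrow> int \<Rightarrow> 'a::field) \<Rightarrow> int \<Rightarrow> int \<Rightarrow> 'a" where
  "pascal W = (THE f. (\<forall>n. f n 0 = 1 \<and> f n n = 1) \<and> pascal_rec W f)"

definition pascal_zeros :: "(int \<times> int) set" where
  "pascal_zeros = {(n, k). 0 \<le> n \<and> n < k \<or> n < k \<and> k \<le> -1 \<or> k \<le> -1 \<and> 0 \<le> n}"

lemma int_eq_const_off_minus_one:
  fixes d :: "int \<Rightarrow> 'a"
  assumes "\<And>n. n \<noteq> -1 \<Longrightarrow> d (n + 1) = d n" "d 0 = c" "d (-1) = c"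
  shows "d n = c"
proof (cases "0 \<le> n")
  case True
  then show ?thesis
  proof (induction n rule: int_ge_induct)
    case (step i)
    then show ?case using assms(1)[of i] by simp
  qed (use assms in simp)
next
  case False
  then have "n \<le> -1" by simp
  then show ?thesis
  proof (induction n rule: int_le_induct)
    case (step i)
    then show ?case using assms(1)[of "i - 1"] by simp
  qed (use assms in simp)
qed

lemma pascal_rec_column_succ:
  assumes f: "pascal_rec W f" and g: "pascal_rec W g" and k: "0 \<le> k"
    and column: "\<And>n. f n k = g n k" and anchor: "f n0 (k + 1) = g n0 (k + 1)"
  shows "f n (k + 1) = g n (k + 1)"
proof -
  define d where "d n = f n (k + 1) - g n (k + 1)" for n
  have "d (n + 1) = d n" for n
    using f[unfolded pascal_rec_def, rule_format, of n "k + 1"]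
      g[unfolded pascal_rec_def, rule_format, of n "k + 1"] k column
    by (simp add: d_def)
  then have "d n = d 0" for n
    by (rule int_eq_const_off_minus_one) (use \<open>d (-1 + 1) = d (-1)\<close> in simp_all)
  from this[of n] this[of n0] anchor show ?thesis
    by (simp add: d_def)
qed

lemma pascal_rec_column_pred:
  assumes W: "\<And>s t. W s t \<noteq> 0" and f: "pascal_rec W f" and g: "pascal_rec W g"
    and column: "\<And>n. f n k = g n k" and nk: "(n + 1, k) \<noteq> (0, 0)"
  shows "f n (k - 1) = g n (k - 1)"
proof -
  have "f n (k - 1) * W k (n + 1 - k) = g n (k - 1) * W k (n + 1 - k)"
    using f[unfolded pascal_rec_def, rule_format, OF nk] g[unfolded pascal_rec_def, rule_format, OF nk]
      column[of n] column[of "n + 1"]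
    by (metis add_left_cancel)
  then show ?thesis
    using W by simp
qed

lemma pascal_rec_unique:
  assumes W: "\<And>s t. W s t \<noteq> 0" and f: "pascal_rec W f" and g: "pascal_rec W g"
    and col0: "\<And>n. f n 0 = g n 0" and corner: "f (-1) (-1) = g (-1) (-1)"
    and anchor: "\<And>k. 0 < k \<Longrightarrow> \<exists>n. f n k = g n k"
  shows "f = g"
proof -
  have nonneg: "f n k = g n k" if "0 \<le> k" for n k
    using that
  proof (induction k arbitrary: n rule: int_ge_induct)
    case base
    then show ?case by (rule col0)
  next
    case (step k)
    obtain n0 where "f n0 (k + 1) = g n0 (k + 1)"
      using anchor[of "k + 1"] step.hyps by auto
    with step show ?case
      using pascal_rec_column_succ[OF f g] by blast
  qed
  have neg: "f n k = g n k" if "k \<le> -1" for n k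
    using that
  proof (induction k arbitrary: n rule: int_le_induct)
    case base
    show ?case
      using pascal_rec_column_pred[OF W f g, of 0 n] nonneg corner by (cases "n = -1") auto
  next
    case (step k)
    then show ?case
      using pascal_rec_column_pred[OF W f g, of k n] by simp
  qed
  show ?thesis
  proof (intro ext)
    show "f n k = g n k" for n k
      using nonneg[of k n] neg[of k n] by linarith
  qed
qed

lemma pascal_rec_boundary:
  assumes W0: "\<And>s. W s 0 = 1" and f: "pascal_rec W f"
    and zeros: "\<And>n k. (n, k) \<in> pascal_zeros \<Longrightarrow> f n k = 0"
    and "f 0 0 = 1" "f (-1) (-1) = 1" "f (-1) 0 = 1"
  shows "f n 0 = 1" and "f n n = 1"
proof -
  have "f (n + 1) 0 = f n 0" if "n \<noteq> -1" for n
  proof -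
    have "(n, -1) \<in> pascal_zeros" using that by (auto simp: pascal_zeros_def)
    with that f zeros show ?thesis by (simp add: pascal_rec_def)
  qed
  then show "f n 0 = 1"
    by (rule int_eq_const_off_minus_one) (use assms in simp_all)
  have "f (n + 1) (n + 1) = f n n" if "n \<noteq> -1" for n
  proof -
    have "(n, n + 1) \<in> pascal_zeros" using that by (auto simp: pascal_zeros_def)
    with that f zeros W0 show ?thesis by (simp add: pascal_rec_def)
  qed
  then show "f n n = 1"
    by (rule int_eq_const_off_minus_one[where d="\<lambda>n. f n n"]) (use assms in simp_all)
qed

definition indef_sum :: "(int \<Rightarrow> 'a::ab_group_add) \<Rightarrow> int \<Rightarrow> 'a" where
  "indef_sum A n = sum A {0..<n} - sum A {n..<0}"

lemma indef_sum_step: "indef_sum A (n + 1) = indef_sum A n + A n"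
proof -
  consider "0 \<le> n" | "n < 0" by linarith
  then show ?thesis
  proof cases
    case 1
    then have "{0..<n + 1} = insert n {0..<n}" by auto
    with 1 show ?thesis by (simp add: indef_sum_def)
  next
    case 2
    then have "{n..<0} = insert n {n + 1..<0}" by auto
    with 2 show ?thesis by (simp add: indef_sum_def)
  qed
qed

(* pascal_up W k is column k and pascal_down W k is column -k-1 of the solution. *)
fun pascal_up :: "(int \<Rightarrow> int \<Rightarrow> 'a::field) \<Rightarrow> nat \<Rightarrow> int \<Rightarrow> 'a" where
  "pascal_up W 0 n = 1"
| "pascal_up W (Suc k) n = indef_sum (\<lambda>i. pascal_up W k i * W (int k + 1) (i - int k)) n"

fun pascal_down :: "(int \<Rightarrow> int \<Rightarrow> 'a::field) \<Rightarrow> nat \<Rightarrow> int \<Rightarrow> 'a" where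
  "pascal_down W 0 n = (if n = -1 then 1 else 0)"
| "pascal_down W (Suc k) n =
     (pascal_down W k (n + 1) - pascal_down W k n) / W (- int k - 1) (n + int k + 2)"

definition pascal_explicit :: "(int \<Rightarrow> int \<Rightarrow> 'a::field) \<Rightarrow> int \<Rightarrow> int \<Rightarrow> 'a" where
  "pascal_explicit W n k =
     (if 0 \<le> k then pascal_up W (nat k) n else pascal_down W (nat (- k - 1)) n)"

lemma pascal_up_zero: "0 \<le> n \<Longrightarrow> n < int k \<Longrightarrow> pascal_up W k n = 0"
proof (induction k arbitrary: n)
  case (Suc k)
  then have "(\<Sum>i\<in>{0..<n}. pascal_up W k i * W (int k + 1) (i - int k)) = 0"
    by (intro sum.neutral) auto
  with Suc.prems show ?case by (simp add: indef_sum_def)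
qed simp

lemma pascal_down_zero: "n < - int k - 1 \<or> 0 \<le> n \<Longrightarrow> pascal_down W k n = 0"
  by (induction k arbitrary: n) auto

lemma pascal_explicit_zeros: "(n, k) \<in> pascal_zeros \<Longrightarrow> pascal_explicit W n k = 0"
  by (auto simp: pascal_explicit_def pascal_zeros_def intro!: pascal_up_zero pascal_down_zero)

lemma pascal_explicit_rec:
  assumes W: "\<And>s t. W s t \<noteq> 0"
  shows "pascal_rec W (pascal_explicit W)"
  unfolding pascal_rec_def
proof (intro allI impI)
  fix n k :: int
  assume nk: "(n + 1, k) \<noteq> (0, 0)"
  consider "1 \<le> k" | "k = 0" | "k \<le> -1" by linarith
  then show "pascal_explicit W (n + 1) k
      = pascal_explicit W n k + pascal_explicit W n (k - 1) * W k (n + 1 - k)"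
  proof cases
    case 1
    define j where "j = nat (k - 1)"
    then have k: "k = int j + 1" using 1 by simp
    show ?thesis
      unfolding k pascal_explicit_def
      using indef_sum_step[of "\<lambda>i. pascal_up W j i * W (int j + 1) (i - int j)" n]
      by (simp add: nat_add_distrib algebra_simps)
  next
    case 2
    with nk show ?thesis by (simp add: pascal_explicit_def)
  next
    case 3
    define j where "j = nat (- k - 1)"
    then have k: "k = - int j - 1" using 3 by simp
    have "nat (- (k - 1) - 1) = Suc j" "W (- int j - 1) (n + int j + 2) = W k (n + 1 - k)"
      unfolding k by (simp_all add: algebra_simps)
    then have "pascal_explicit W n (k - 1)
        = (pascal_down W j (n + 1) - pascal_down W j n) / W k (n + 1 - k)"
      using 3 k by (simp add: pascal_explicit_def)
    then have "pascal_explicit W n (k - 1) * W k (n + 1 - k)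
        = pascal_down W j (n + 1) - pascal_down W j n"
      using W[of k "n + 1 - k"] by simp
    then show ?thesis
      using 3 by (simp add: k pascal_explicit_def)
  qed
qed

locale pascal_weights =
  fixes W :: "int \<Rightarrow> int \<Rightarrow> 'a::field"
  assumes nonzero: "W s t \<noteq> 0" and col0: "W s 0 = 1"
begin

lemma rec_pascal_explicit: "pascal_rec W (pascal_explicit W)"
  by (rule pascal_explicit_rec) (rule nonzero)

lemma pascal_explicit_boundary: "pascal_explicit W n 0 = 1" "pascal_explicit W n n = 1"
  by (rule pascal_rec_boundary[OF col0 rec_pascal_explicit pascal_explicit_zeros];
      simp add: pascal_explicit_def)+

lemma pascal_eq_explicit: "pascal W = pascal_explicit W"
  unfolding pascal_def
proof (rule the_equality)
  show "(\<forall>n. pascal_explicit W n 0 = 1 \<and> pascal_explicit W n n = 1) \<and> pascal_rec W (pascal_explicit W)"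
    using pascal_explicit_boundary rec_pascal_explicit by blast
  fix f
  assume f: "(\<forall>n. f n 0 = 1 \<and> f n n = 1) \<and> pascal_rec W f"
  show "f = pascal_explicit W"
  proof (rule pascal_rec_unique[OF _ _ rec_pascal_explicit])
    show "\<exists>n. f n k = pascal_explicit W n k" for k
    proof
      show "f k k = pascal_explicit W k k"
        using f pascal_explicit_boundary by simp
    qed
  qed (use f pascal_explicit_boundary nonzero in auto)
qed

lemma rec_pascal: "pascal_rec W (pascal W)"
  using pascal_eq_explicit rec_pascal_explicit by simp

lemma pascal_step:
  "(n + 1, k) \<noteq> (0, 0) \<Longrightarrow> pascal W (n + 1) k = pascal W n k + pascal W n (k - 1) * W k (n + 1 - k)"
  using rec_pascal by (simp add: pascal_rec_def)

lemma pascal_zero: "(n, k) \<in> pascal_zeros \<Longrightarrow> pascal W n k = 0"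
  by (simp add: pascal_eq_explicit pascal_explicit_zeros)

lemma pascal_col0: "pascal W n 0 = 1" and pascal_diag: "pascal W n n = 1"
  by (simp_all add: pascal_eq_explicit pascal_explicit_boundary)

lemma pascal_eqI:
  assumes g: "pascal_rec W g" and zeros: "\<And>n k. (n, k) \<in> pascal_zeros \<Longrightarrow> g n k = 0"
    and "g 0 0 = 1" "g (-1) (-1) = 1" "g (-1) 0 = 1"
  shows "pascal W = g"
proof (rule pascal_rec_unique[OF _ rec_pascal g])
  show "W s t \<noteq> 0" for s t
    by (rule nonzero)
  show "pascal W n 0 = g n 0" for n
    using pascal_rec_boundary(1)[OF col0 g zeros] assms by (simp add: pascal_col0)
  show "pascal W (-1) (-1) = g (-1) (-1)"
    using assms by (simp add: pascal_diag)
  show "\<exists>n. pascal W n k = g n k" if "0 < k" for k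
  proof
    have "(0, k) \<in> pascal_zeros" using that by (simp add: pascal_zeros_def)
    then show "pascal W 0 k = g 0 k" by (simp add: pascal_zero zeros)
  qed
qed

end

section \<open>Symmetries of the elliptic binomial coefficients\<close>

lemma ebinom_eq_pascal: "ebinom a b q p = pascal (eW a b q p)"
  by (simp add: ebinom_def pascal_def pascal_rec_def)

lemma eW_zero: "eW a b q p s 0 = 1"
  by (simp add: eW_def cprod_def)

lemma eW_nonzero: "(\<And>j. ew a b q p s j \<noteq> 0) \<Longrightarrow> eW a b q p s t \<noteq> 0"
  unfolding eW_def by (rule cprod_nonzero)

definition alt_sign :: "int \<Rightarrow> complex" where
  "alt_sign m = (-1) powi m * isgn m"

lemma alt_sign_succ: "m \<noteq> -1 \<Longrightarrow> alt_sign (m + 1) = - alt_sign m"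
  by (auto simp: alt_sign_def isgn_def power_int_add)

lemma alt_sign_0 [simp]: "alt_sign 0 = 1" and alt_sign_minus_one [simp]: "alt_sign (-1) = 1"
  by (simp_all add: alt_sign_def isgn_def)

locale elliptic_params =
  fixes a b q p :: complex
  assumes p: "norm p < 1" and a: "a \<noteq> 0" and b: "b \<noteq> 0" and q: "q \<noteq> 0"
    and theta_a: "etheta (a * q powi m) p \<noteq> 0"
    and theta_b: "etheta (b * q powi m) p \<noteq> 0"
    and theta_ab: "etheta (a * q powi m / b) p \<noteq> 0"
begin

lemma ew_nonzero: "ew a b q p s t \<noteq> 0"
  unfolding ew_def using theta_a theta_b theta_ab q by simp

sublocale ab: pascal_weights "eW a b q p"
  by unfold_locales (simp_all add: eW_nonzero ew_nonzero eW_zero)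

sublocale ba: pascal_weights "eW b a q p"
  by unfold_locales (simp_all add: eW_nonzero ew_nonzero eW_zero ew_swap[OF p a b q])

sublocale quot: pascal_weights "eW (a / b) (1 / b) q p"
  by unfold_locales (simp_all add: eW_nonzero ew_nonzero eW_zero ew_quot[OF p a b q])

sublocale recip: pascal_weights "eW (1 / a) (b / a) q p"
  by unfold_locales (simp_all add: eW_nonzero ew_nonzero eW_zero ew_recip[OF p a b q])

lemma eW_last: "eW a b q p s t = eW a b q p s (t - 1) * ew a b q p s t"
  unfolding eW_def by (rule cprod_last) (rule ew_nonzero)

definition symmetry_factor :: "int \<Rightarrow> int \<Rightarrow> complex" where
  "symmetry_factor n k = cprod (\<lambda>j. eW a b q p j (n - k)) 1 k"

definition reflection_factor :: "int \<Rightarrow> int \<Rightarrow> complex" where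
  "reflection_factor n k = cprod (\<lambda>j. inverse (eW a b q p (n + 1 - j) j)) 1 (n - k)"

definition negation_factor :: "int \<Rightarrow> complex" where
  "negation_factor k = cprod (\<lambda>j. eW a b q p j (-j)) 1 k"

lemma symmetry_factor_succ:
  "symmetry_factor (n + 1) k = symmetry_factor n (k - 1) * eW a b q p k (n + 1 - k)"
  unfolding symmetry_factor_def
  using cprod_last[where A="\<lambda>j. eW a b q p j (n + 1 - k)" and l=1 and m=k] ab.nonzero
  by (simp add: algebra_simps)

lemma symmetry_factor_swap:
  "symmetry_factor (n + 1) k * eW b a q p (n - k + 1) k = symmetry_factor n k"
proof -
  have "eW a b q p j (n + 1 - k) = eW a b q p j (n - k) * ew a b q p j (n - k + 1)" for j
    using eW_last[of j "n + 1 - k"] by (simp add: algebra_simps)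
  then have "symmetry_factor (n + 1) k
      = cprod (\<lambda>j. eW a b q p j (n - k) * ew a b q p j (n - k + 1)) 1 k"
    unfolding symmetry_factor_def by simp
  also have "\<dots> = symmetry_factor n k * inverse (eW b a q p (n - k + 1) k)"
    by (simp add: symmetry_factor_def cprod_mult eW_def ew_swap[OF p a b q] cprod_inverse)
  finally show ?thesis
    using ba.nonzero by simp
qed

lemma rec_symmetry:
  "pascal_rec (eW a b q p) (\<lambda>n k. pascal (eW b a q p) n (n - k) * symmetry_factor n k)"
  unfolding pascal_rec_def
proof (intro allI impI)
  fix n k :: int
  assume "(n + 1, k) \<noteq> (0, 0)"
  then have "(n + 1, n - k + 1) \<noteq> (0, 0)" by auto
  from ba.pascal_step[OF this]
  have "pascal (eW b a q p) (n + 1) (n + 1 - k) = pascal (eW b a q p) n (n - (k - 1))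
      + pascal (eW b a q p) n (n - k) * eW b a q p (n - k + 1) k"
    by (simp add: algebra_simps)
  with symmetry_factor_succ[of n k] symmetry_factor_swap[of n k]
  show "pascal (eW b a q p) (n + 1) (n + 1 - k) * symmetry_factor (n + 1) k
      = pascal (eW b a q p) n (n - k) * symmetry_factor n k
        + pascal (eW b a q p) n (n - (k - 1)) * symmetry_factor n (k - 1) * eW a b q p k (n + 1 - k)"
    by (simp add: algebra_simps)
qed

lemma ebinom_symmetry:
  "ebinom a b q p n k = ebinom b a q p n (n - k) * cprod (\<lambda>j. eW a b q p j (n - k)) 1 k"
proof -
  have "pascal (eW a b q p) = (\<lambda>n k. pascal (eW b a q p) n (n - k) * symmetry_factor n k)"
  proof (rule ab.pascal_eqI[OF rec_symmetry])
    fix n k :: int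
    assume "(n, k) \<in> pascal_zeros"
    then have "(n, n - k) \<in> pascal_zeros" by (auto simp: pascal_zeros_def)
    then show "pascal (eW b a q p) n (n - k) * symmetry_factor n k = 0"
      by (simp add: ba.pascal_zero)
  qed (simp_all add: symmetry_factor_def cprod_def ba.pascal_col0 ba.pascal_diag eW_zero)
  then show ?thesis
    by (simp add: ebinom_eq_pascal symmetry_factor_def)
qed

lemma reflection_factor_pred:
  "reflection_factor n (k - 1) * eW a b q p k (n + 1 - k) = reflection_factor n k"
proof -
  have "reflection_factor n (k - 1) = reflection_factor n k * inverse (eW a b q p k (n + 1 - k))"
    unfolding reflection_factor_def
    using cprod_last[where A="\<lambda>j. inverse (eW a b q p (n + 1 - j) j)" and l=1 and m="n - k + 1"] ab.nonzero
    by (simp add: algebra_simps)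
  then show ?thesis
    using ab.nonzero by simp
qed

lemma reflection_factor_succ:
  "reflection_factor (n + 1) k = reflection_factor n k * eW (a / b) (1 / b) q p (-n - 1) (n - k + 1)"
proof -
  have "inverse (eW a b q p (n + 2 - j) j)
      = inverse (eW a b q p (n + 2 - j) (j - 1)) * inverse (ew a b q p (n + 2 - j) j)" for j
    using eW_last[of "n + 2 - j" j] by simp
  then have "reflection_factor (n + 1) k
      = cprod (\<lambda>j. inverse (eW a b q p (n + 2 - j) (j - 1))) 1 (n - k + 1)
        * cprod (\<lambda>j. inverse (ew a b q p (n + 2 - j) j)) 1 (n - k + 1)"
    unfolding reflection_factor_def cprod_mult[symmetric] by (simp add: algebra_simps)
  also have "cprod (\<lambda>j. inverse (ew a b q p (n + 2 - j) j)) 1 (n - k + 1)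
      = eW (a / b) (1 / b) q p (- n - 1) (n - k + 1)"
    unfolding eW_def ew_quot[OF p a b q] by (simp add: algebra_simps)
  also have "cprod (\<lambda>j. inverse (eW a b q p (n + 2 - j) (j - 1))) 1 (n - k + 1)
      = cprod (\<lambda>j. inverse (eW a b q p (n + 1 - j) j)) 0 (n - k)"
    by (subst cprod_shift) (simp add: algebra_simps)
  also have "\<dots> = reflection_factor n k"
    unfolding reflection_factor_def by (subst cprod_first) (simp_all add: ab.nonzero eW_zero)
  finally show ?thesis .
qed

lemma rec_reflection:
  "pascal_rec (eW a b q p)
     (\<lambda>n k. alt_sign (n - k) * pascal (eW (a / b) (1 / b) q p) (-k - 1) (-n - 1) * reflection_factor n k)"
proof -
  define B where "B = pascal (eW (a / b) (1 / b) q p)"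
  define g where "g = (\<lambda>n k. alt_sign (n - k) * B (-k - 1) (-n - 1) * reflection_factor n k)"
  have "g (n + 1) k = g n k + g n (k - 1) * eW a b q p k (n + 1 - k)"
    if nk: "(n + 1, k) \<noteq> (0, 0)" for n k
  proof (cases "n - k = -1")
    case True
    then have k: "k = n + 1" and "(-k - 1, -n - 1) \<in> pascal_zeros"
      using nk by (auto simp: pascal_zeros_def)
    then have "g n k = 0"
      by (simp add: g_def B_def quot.pascal_zero)
    moreover have "g m m = 1" for m
      by (simp add: g_def B_def reflection_factor_def cprod_def quot.pascal_diag)
    ultimately show ?thesis
      using k by (simp add: eW_zero)
  next
    case False
    have "(-k - 1 + 1, -n - 1) \<noteq> (0, 0)" using nk by auto
    from quot.pascal_step[OF this]
    have rec: "B (-k) (-n - 1) = B (-k - 1) (-n - 1)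
        + B (-k - 1) (-n - 2) * eW (a / b) (1 / b) q p (-n - 1) (n - k + 1)"
      by (simp add: B_def algebra_simps)
    have "g n k + g n (k - 1) * eW a b q p k (n + 1 - k)
        = alt_sign (n - k) * B (-k - 1) (-n - 1) * reflection_factor n k
          + alt_sign (n - k + 1) * B (-k) (-n - 1) * reflection_factor n k"
      using reflection_factor_pred[of n k] by (simp add: g_def algebra_simps)
    also have "\<dots>
        = alt_sign (n - k + 1) * (B (-k) (-n - 1) - B (-k - 1) (-n - 1)) * reflection_factor n k"
      unfolding alt_sign_succ[OF False] by (simp add: algebra_simps)
    also have "\<dots> = alt_sign (n - k + 1) * B (-k - 1) (-n - 2) * reflection_factor (n + 1) k"
      by (simp add: rec reflection_factor_succ)
    also have "\<dots> = g (n + 1) k"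
      by (simp add: g_def algebra_simps)
    finally show ?thesis ..
  qed
  then show ?thesis
    by (simp add: pascal_rec_def g_def B_def)
qed

lemma ebinom_reflection:
  "ebinom a b q p n k = (-1) powi (n - k) * isgn (n - k) * ebinom (a / b) (1 / b) q p (-k - 1) (-n - 1)
     * cprod (\<lambda>j. inverse (eW a b q p (n + 1 - j) j)) 1 (n - k)"
proof -
  have "pascal (eW a b q p)
      = (\<lambda>n k. alt_sign (n - k) * pascal (eW (a / b) (1 / b) q p) (-k - 1) (-n - 1) * reflection_factor n k)"
  proof (rule ab.pascal_eqI[OF rec_reflection])
    fix n k :: int
    assume "(n, k) \<in> pascal_zeros"
    then have "(-k - 1, -n - 1) \<in> pascal_zeros" by (auto simp: pascal_zeros_def)
    then show
      "alt_sign (n - k) * pascal (eW (a / b) (1 / b) q p) (-k - 1) (-n - 1) * reflection_factor n k = 0"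
      by (simp add: quot.pascal_zero)
  qed (simp_all add: reflection_factor_def cprod_def eW_zero quot.pascal_diag quot.pascal_col0)
  then show ?thesis
    by (simp add: ebinom_eq_pascal alt_sign_def reflection_factor_def)
qed

lemma negation_factor_pred: "negation_factor k = negation_factor (k - 1) * eW a b q p k (-k)"
  unfolding negation_factor_def by (rule cprod_last) (rule ab.nonzero)

lemma eW_mult_eW_recip:
  "eW a b q p k (-k) * eW (1 / a) (b / a) q p k (-n - 1) = eW a b q p k (n + 1 - k)"
  using cprod_reflect[where u="ew a b q p k" and c="-k" and T="-n - 1"] ew_nonzero
  by (simp add: eW_def ew_recip[OF p a b q] algebra_simps)

lemma rec_upper_negation:
  "pascal_rec (eW a b q p)
     (\<lambda>n k. alt_sign k * pascal (eW (1 / a) (b / a) q p) (k - n - 1) k * negation_factor k)"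
proof -
  define B where "B = pascal (eW (1 / a) (b / a) q p)"
  define g where "g = (\<lambda>n k. alt_sign k * B (k - n - 1) k * negation_factor k)"
  have "g (n + 1) k = g n k + g n (k - 1) * eW a b q p k (n + 1 - k)"
    if nk: "(n + 1, k) \<noteq> (0, 0)" for n k
  proof (cases "k = 0")
    case True
    then have "(k - 1 - n - 1, k - 1) \<in> pascal_zeros"
      using nk by (auto simp: pascal_zeros_def)
    then have "g n (k - 1) = 0"
      by (simp add: g_def B_def recip.pascal_zero)
    moreover have "g m 0 = 1" for m
      by (simp add: g_def B_def negation_factor_def cprod_def recip.pascal_col0)
    ultimately show ?thesis
      using True by simp
  next
    case False
    then have "(k - n - 2 + 1, k) \<noteq> (0, 0)" by auto
    note step = recip.pascal_step[OF this]
    have "k - n - 2 + 1 = k - n - 1" "k - n - 2 + 1 - k = -n - 1" by simp_all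
    with step have rec: "B (k - n - 1) k
        = B (k - n - 2) k + B (k - n - 2) (k - 1) * eW (1 / a) (b / a) q p k (-n - 1)"
      by (simp only: B_def)
    have sign: "alt_sign (k - 1) = - alt_sign k"
      using alt_sign_succ[of "k - 1"] False by simp
    have "g n k + g n (k - 1) * eW a b q p k (n + 1 - k)
        = alt_sign k * B (k - n - 1) k * negation_factor k
          + alt_sign (k - 1) * B (k - n - 2) (k - 1) * negation_factor (k - 1)
            * eW a b q p k (-k) * eW (1 / a) (b / a) q p k (-n - 1)"
      unfolding eW_mult_eW_recip[symmetric] by (simp add: g_def algebra_simps)
    also have "\<dots> = alt_sign k
        * (B (k - n - 1) k - B (k - n - 2) (k - 1) * eW (1 / a) (b / a) q p k (-n - 1))
        * negation_factor k"
      unfolding sign negation_factor_pred[of k] by (simp add: algebra_simps)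
    also have "\<dots> = g (n + 1) k"
      unfolding rec by (simp add: g_def algebra_simps)
    finally show ?thesis ..
  qed
  then show ?thesis
    by (simp add: pascal_rec_def g_def B_def)
qed

lemma ebinom_upper_negation:
  "ebinom a b q p n k = (-1) powi k * isgn k * ebinom (1 / a) (b / a) q p (k - n - 1) k
     * cprod (\<lambda>j. eW a b q p j (-j)) 1 k"
proof -
  have "pascal (eW a b q p)
      = (\<lambda>n k. alt_sign k * pascal (eW (1 / a) (b / a) q p) (k - n - 1) k * negation_factor k)"
  proof (rule ab.pascal_eqI[OF rec_upper_negation])
    fix n k :: int
    assume "(n, k) \<in> pascal_zeros"
    then have "(k - n - 1, k) \<in> pascal_zeros" by (auto simp: pascal_zeros_def)
    then show "alt_sign k * pascal (eW (1 / a) (b / a) q p) (k - n - 1) k * negation_factor k = 0"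
      by (simp add: recip.pascal_zero)
  qed (simp_all add: negation_factor_def cprod_def eW_zero recip.pascal_diag recip.pascal_col0)
  then show ?thesis
    by (simp add: ebinom_eq_pascal alt_sign_def negation_factor_def)
qed

end

theorem corollary3:
  fixes a b q p :: complex and n k :: int
  assumes "norm p < 1"
    and "a \<noteq> 0" and "b \<noteq> 0" and "q \<noteq> 0"
    and "\<And>m::int. etheta (a * q powi m) p \<noteq> 0"
    and "\<And>m::int. etheta (b * q powi m) p \<noteq> 0"
    and "\<And>m::int. etheta (a * q powi m / b) p \<noteq> 0"
    and "\<And>m::int. etheta (b * q powi m / a) p \<noteq> 0"
    and "\<And>m::int. m \<noteq> 0 \<Longrightarrow> etheta (q powi m) p \<noteq> 0"
  shows "ebinom a b q p n k
           = ebinom b a q p n (n - k) * cprod (\<lambda>j. eW a b q p j (n - k)) 1 k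
       \<and> ebinom a b q p n k
           = (-1) powi (n - k) * isgn (n - k) * ebinom (a / b) (1 / b) q p (-k - 1) (-n - 1)
             * cprod (\<lambda>j. inverse (eW a b q p (n + 1 - j) j)) 1 (n - k)
       \<and> ebinom a b q p n k
           = (-1) powi k * isgn k * ebinom (1 / a) (b / a) q p (k - n - 1) k
             * cprod (\<lambda>j. eW a b q p j (-j)) 1 k"
proof -
  interpret elliptic_params a b q p
    using assms(1-7) by unfold_locales
  show ?thesis
    using ebinom_symmetry ebinom_reflection ebinom_upper_negation by (intro conjI)
qed

end
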